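(* Let $R$ be a semiprime left Goldie ring, let $\mathcal{C}$ be the set of regular elements of $R$, write its classical left quotient ring as $Q_{l,cl}(R)=\prod_{i=1}^nQ_i$ with $Q_1,\ldots,Q_n$ simple Artinian rings, and let $\sigma:R\to Q_{l,cl}(R)$, $r\mapsto\frac{r}{1}$. Then: (1) $\mathcal{C}\subseteq S$ for all $S\in\max\mathrm{Den}_l(R)$; (2) $\max\mathrm{Den}_l(R)=\{S_1,\ldots,S_n\}$ and $\max\mathrm{Den}_l(Q_{l,cl}(R))=\{S_1',\ldots,S_n'\}$, where $S_i':=Q_1\times\cdots\times Q_i^*\times\cdots\times Q_n$ ($Q_i^*$ the group of units of $Q_i$, in the $i$-th place) and $S_i:=\sigma^{-1}(S_i')$; the map $\max\mathrm{Den}_l(R)\to\max\mathrm{Den}_l(Q_{l,cl}(R))$, $S\mapsto\widetilde{S}$, is a bijection with inverse $\mathcal{T}\mapsto\sigma^{-1}(\mathcal{T})$, where $\widetilde{S}$ is the multiplicative monoid generated in $Q_{l,cl}(R)$ by $\sigma(S)$ and $\{c^{-1}:c\in\mathcal{C}\}$; (3) $S_i^{-1}R\cong Q_i$ for $i=1,\ldots,n$.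
   Context: All rings are associative with $1$. A multiplicative subset $S$ of $R$ ($1\in S$, $0\notin S$, closed under multiplication) is a left Ore set if $Sr\cap Rs\neq\emptyset$ for all $r\in R$, $s\in S$. A left Ore set $S$ is a left denominator set if $rs=0$ ($r\in R$, $s\in S$) implies $tr=0$ for some $t\in S$; $S^{-1}R$ is the left localization. $\max\mathrm{Den}_l(R)$ is the set of maximal elements, under inclusion, of the set of left denominator sets of $R$. The classical left quotient ring is $Q_{l,cl}(R):=\mathcal{C}^{-1}R$ (which exists and is semisimple Artinian for semiprime left Goldie $R$ by Goldie's theorem). *)

theory Defs
  imports "HOL-Algebra.Algebra"
begin

definition left_ideal :: "'a set \<Rightarrow> ('a, 'm) ring_scheme \<Rightarrow> bool" where
  "left_ideal L R \<longleftrightarrow> additive_subgroup L R \<and>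
     (\<forall>r\<in>carrier R. \<forall>x\<in>L. r \<otimes>\<^bsub>R\<^esub> x \<in> L)"

definition regular_elems :: "('a, 'm) ring_scheme \<Rightarrow> 'a set" where
  "regular_elems R = {c \<in> carrier R. \<forall>x\<in>carrier R.
      (c \<otimes>\<^bsub>R\<^esub> x = \<zero>\<^bsub>R\<^esub> \<longrightarrow> x = \<zero>\<^bsub>R\<^esub>) \<and>
      (x \<otimes>\<^bsub>R\<^esub> c = \<zero>\<^bsub>R\<^esub> \<longrightarrow> x = \<zero>\<^bsub>R\<^esub>)}"

definition semiprime_ring :: "('a, 'm) ring_scheme \<Rightarrow> bool" where
  "semiprime_ring R \<longleftrightarrow> ring R \<and>
     (\<forall>I. ideal I R \<and> (\<forall>a\<in>I. \<forall>b\<in>I. a \<otimes>\<^bsub>R\<^esub> b = \<zero>\<^bsub>R\<^esub>) \<longrightarrow> I = {\<zero>\<^bsub>R\<^esub>})"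

definition left_annihilator :: "('a, 'm) ring_scheme \<Rightarrow> 'a set \<Rightarrow> 'a set" where
  "left_annihilator R Y = {r \<in> carrier R. \<forall>x\<in>Y. r \<otimes>\<^bsub>R\<^esub> x = \<zero>\<^bsub>R\<^esub>}"

text \<open>Left Goldie: ACC on left annihilators and no infinite direct sums of nonzero left ideals.\<close>
definition left_Goldie :: "('a, 'm) ring_scheme \<Rightarrow> bool" where
  "left_Goldie R \<longleftrightarrow> ring R \<and>
     \<not> (\<exists>A :: nat \<Rightarrow> 'a set.
          (\<forall>k. \<exists>Y\<subseteq>carrier R. A k = left_annihilator R Y) \<and> (\<forall>k. A k \<subset> A (Suc k))) \<and>
     \<not> (\<exists>L :: nat \<Rightarrow> 'a set.
          (\<forall>k. left_ideal (L k) R \<and> L k \<noteq> {\<zero>\<^bsub>R\<^esub>}) \<and>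
          (\<forall>k x. (\<forall>i\<le>k. x i \<in> L i) \<and> finsum R x {..k} = \<zero>\<^bsub>R\<^esub>
                   \<longrightarrow> (\<forall>i\<le>k. x i = \<zero>\<^bsub>R\<^esub>)))"

definition simple_ring :: "('a, 'm) ring_scheme \<Rightarrow> bool" where
  "simple_ring R \<longleftrightarrow> ring R \<and> \<one>\<^bsub>R\<^esub> \<noteq> \<zero>\<^bsub>R\<^esub> \<and>
     (\<forall>I. ideal I R \<longrightarrow> I = {\<zero>\<^bsub>R\<^esub>} \<or> I = carrier R)"

definition left_Artinian :: "('a, 'm) ring_scheme \<Rightarrow> bool" where
  "left_Artinian R \<longleftrightarrow> ring R \<and>
     \<not> (\<exists>L :: nat \<Rightarrow> 'a set. (\<forall>k. left_ideal (L k) R) \<and> (\<forall>k. L (Suc k) \<subset> L k))"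

definition simple_Artinian :: "('a, 'm) ring_scheme \<Rightarrow> bool" where
  "simple_Artinian R \<longleftrightarrow> simple_ring R \<and> left_Artinian R"

definition mult_subset :: "('a, 'm) ring_scheme \<Rightarrow> 'a set \<Rightarrow> bool" where
  "mult_subset R S \<longleftrightarrow> S \<subseteq> carrier R \<and> \<one>\<^bsub>R\<^esub> \<in> S \<and> \<zero>\<^bsub>R\<^esub> \<notin> S \<and>
     (\<forall>a\<in>S. \<forall>b\<in>S. a \<otimes>\<^bsub>R\<^esub> b \<in> S)"

definition left_Ore_set :: "('a, 'm) ring_scheme \<Rightarrow> 'a set \<Rightarrow> bool" where
  "left_Ore_set R S \<longleftrightarrow> mult_subset R S \<and>
     (\<forall>r\<in>carrier R. \<forall>s\<in>S. \<exists>s'\<in>S. \<exists>r'\<in>carrier R. s' \<otimes>\<^bsub>R\<^esub> r = r' \<otimes>\<^bsub>R\<^esub> s)"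

definition left_den_set :: "('a, 'm) ring_scheme \<Rightarrow> 'a set \<Rightarrow> bool" where
  "left_den_set R S \<longleftrightarrow> left_Ore_set R S \<and>
     (\<forall>r\<in>carrier R. \<forall>s\<in>S. r \<otimes>\<^bsub>R\<^esub> s = \<zero>\<^bsub>R\<^esub> \<longrightarrow> (\<exists>t\<in>S. t \<otimes>\<^bsub>R\<^esub> r = \<zero>\<^bsub>R\<^esub>))"

definition maxDen_l :: "('a, 'm) ring_scheme \<Rightarrow> 'a set set" where
  "maxDen_l R = {S. left_den_set R S \<and> (\<forall>T. left_den_set R T \<and> S \<subseteq> T \<longrightarrow> T = S)}"

text \<open>This determines \<open>(Q,\<sigma>)\<close> up to unique isomorphism.\<close>
definition is_left_localization ::
  "('a, 'm) ring_scheme \<Rightarrow> 'a set \<Rightarrow> ('b, 'n) ring_scheme \<Rightarrow> ('a \<Rightarrow> 'b) \<Rightarrow> bool" where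
  "is_left_localization R S Q \<sigma> \<longleftrightarrow> ring R \<and> ring Q \<and> left_den_set R S \<and>
     \<sigma> \<in> ring_hom R Q \<and>
     (\<forall>s\<in>S. \<sigma> s \<in> Units Q) \<and>
     (\<forall>q\<in>carrier Q. \<exists>s\<in>S. \<exists>r\<in>carrier R. q = inv\<^bsub>Q\<^esub> (\<sigma> s) \<otimes>\<^bsub>Q\<^esub> \<sigma> r) \<and>
     (\<forall>r\<in>carrier R. \<sigma> r = \<zero>\<^bsub>Q\<^esub> \<longleftrightarrow> (\<exists>s\<in>S. s \<otimes>\<^bsub>R\<^esub> r = \<zero>\<^bsub>R\<^esub>))"

definition mult_monoid_gen :: "('b, 'n) ring_scheme \<Rightarrow> 'b set \<Rightarrow> 'b set" where
  "mult_monoid_gen Q Y = \<Inter>{M. M \<subseteq> carrier Q \<and> \<one>\<^bsub>Q\<^esub> \<in> M \<and> Y \<subseteq> M \<and>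
                               (\<forall>a\<in>M. \<forall>b\<in>M. a \<otimes>\<^bsub>Q\<^esub> b \<in> M)}"

definition tilde_set ::
  "('a, 'm) ring_scheme \<Rightarrow> ('b, 'n) ring_scheme \<Rightarrow> ('a \<Rightarrow> 'b) \<Rightarrow> 'a set \<Rightarrow> 'b set" where
  "tilde_set R Q \<sigma> S = mult_monoid_gen Q (\<sigma> ` S \<union> {inv\<^bsub>Q\<^esub> (\<sigma> c) | c. c \<in> regular_elems R})"

end

theory Submission
  imports Defs
begin

text \<open>
  Write \<open>\<phi>\<^sub>i = \<pi>\<^sub>i \<circ> \<sigma> : R \<rightarrow> Q\<^sub>i\<close>. Given a left denominator set \<open>T\<close>, the elements of \<open>Q\<^sub>i\<close> killed on
  the left by some \<open>\<phi>\<^sub>i(t)\<close>, \<open>t \<in> T\<close>, generate (after clearing denominators from \<open>\<C>\<close> by the Ore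
  condition) a two-sided ideal of the simple ring \<open>Q\<^sub>i\<close>. If it is zero, every \<open>\<phi>\<^sub>i(t)\<close> is a
  non-zero-divisor of the Artinian ring \<open>Q\<^sub>i\<close>, hence a unit; otherwise \<open>\<phi>\<^sub>i(t) = 0\<close> for some
  \<open>t \<in> T\<close>. The second alternative cannot hold for all \<open>i\<close>, since a product of the witnesses
  would be a nonzero element of \<open>T\<close> vanishing in \<open>Q\<close>. So every left denominator set lies in some
  \<open>S\<^sub>i = \<phi>\<^sub>i\<^sup>-\<^sup>1(Q\<^sub>i\<^sup>*)\<close>, and lifts of the central idempotents of \<open>Q\<close> show that each \<open>S\<^sub>i\<close> is
  itself a left denominator set with \<open>S\<^sub>i\<^sup>-\<^sup>1R = Q\<^sub>i\<close>. The same argument applies to \<open>Q\<close>, viewed as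
  its own ring of fractions, and yields the sets \<open>S\<^sub>i'\<close>.
\<close>

lemma (in ring) zero_not_in_Units:
  assumes "\<one> \<noteq> \<zero>"
  shows "\<zero> \<notin> Units R"
  using assms by (auto simp: Units_def)

lemma (in ring) Units_mult_eq_zero_iff:
  assumes "u \<in> Units R" "x \<in> carrier R"
  shows "u \<otimes> x = \<zero> \<longleftrightarrow> x = \<zero>"
  using assms by (metis Units_closed Units_l_cancel r_null zero_closed)

lemma (in ring) mult_Units_eq_zero_iff:
  assumes "u \<in> Units R" "x \<in> carrier R"
  shows "x \<otimes> u = \<zero> \<longleftrightarrow> x = \<zero>"
proof
  assume "x \<otimes> u = \<zero>"
  then have "(x \<otimes> u) \<otimes> inv u = \<zero>" using assms by simp
  then show "x = \<zero>" using assms by (metis Units_closed Units_inv_closed Units_r_inv m_assoc r_one)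
qed (use assms in \<open>simp add: Units_closed\<close>)

lemma (in ring_hom_ring) hom_Units:
  assumes "u \<in> Units R"
  shows "h u \<in> Units S" and "h (inv u) = inv\<^bsub>S\<^esub> (h u)"
proof -
  have u: "u \<in> carrier R" "inv u \<in> carrier R" using assms by auto
  have r: "h u \<otimes>\<^bsub>S\<^esub> h (inv u) = \<one>\<^bsub>S\<^esub>" and l: "h (inv u) \<otimes>\<^bsub>S\<^esub> h u = \<one>\<^bsub>S\<^esub>"
    using assms u by (simp_all flip: hom_mult)
  show "h u \<in> Units S" using r l u by (auto simp: Units_def)
  show "h (inv u) = inv\<^bsub>S\<^esub> (h u)" using S.inv_unique' r l u by simp
qed

lemma (in ring) left_ideal_right_multiples:
  assumes "b \<in> carrier R"
  shows "left_ideal {x \<otimes> b | x. x \<in> carrier R} R"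
  unfolding left_ideal_def
proof (intro conjI ballI additive_subgroupI add.subgroupI)
  show "{x \<otimes> b | x. x \<in> carrier R} \<subseteq> carrier R" using assms by auto
  show "{x \<otimes> b | x. x \<in> carrier R} \<noteq> {}" by blast
  show "\<ominus> y \<in> {x \<otimes> b | x. x \<in> carrier R}" if "y \<in> {x \<otimes> b | x. x \<in> carrier R}" for y
  proof -
    from that obtain x where "x \<in> carrier R" "y = x \<otimes> b" by blast
    then show ?thesis using assms by (auto simp: l_minus intro!: exI[of _ "\<ominus> x"])
  qed
  show "y \<oplus> z \<in> {x \<otimes> b | x. x \<in> carrier R}"
    if "y \<in> {x \<otimes> b | x. x \<in> carrier R}" "z \<in> {x \<otimes> b | x. x \<in> carrier R}" for y z
  proof -
    from that obtain x x' where "x \<in> carrier R" "x' \<in> carrier R" "y = x \<otimes> b" "z = x' \<otimes> b" by blast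
    then show ?thesis using assms by (auto simp: l_distr intro!: exI[of _ "x \<oplus> x'"])
  qed
  show "r \<otimes> y \<in> {x \<otimes> b | x. x \<in> carrier R}" if "r \<in> carrier R" "y \<in> {x \<otimes> b | x. x \<in> carrier R}" for r y
  proof -
    from that obtain x where "x \<in> carrier R" "y = x \<otimes> b" by blast
    then show ?thesis using that(1) assms by (auto simp: m_assoc intro!: exI[of _ "r \<otimes> x"])
  qed
qed

lemma left_Artinian_right_regular_imp_Units:
  fixes A (structure)
  assumes Artinian: "left_Artinian A" and a: "a \<in> carrier A"
    and regular: "\<And>x. x \<in> carrier A \<Longrightarrow> x \<otimes> a = \<zero> \<Longrightarrow> x = \<zero>"
  shows "a \<in> Units A"
proof -
  interpret ring A using Artinian unfolding left_Artinian_def by blast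
  define L where "L k = {x \<otimes> a [^] (k::nat) | x. x \<in> carrier A}" for k
  have pow_Suc: "x \<otimes> a [^] Suc k = (x \<otimes> a) \<otimes> a [^] k" if "x \<in> carrier A" for x k
    using that a by (metis m_assoc nat_pow_Suc2 nat_pow_closed)
  have "L (Suc k) \<subseteq> L k" for k
  proof
    fix z assume "z \<in> L (Suc k)"
    then obtain x where x: "x \<in> carrier A" "z = x \<otimes> a [^] Suc k" unfolding L_def by blast
    then have "x \<otimes> a \<in> carrier A" "z = (x \<otimes> a) \<otimes> a [^] k" using a pow_Suc by auto
    then show "z \<in> L k" unfolding L_def by blast
  qed
  moreover have "left_ideal (L k) A" for k
    unfolding L_def using a by (intro left_ideal_right_multiples) simp
  ultimately obtain k where "L k \<subseteq> L (Suc k)"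
    using Artinian unfolding left_Artinian_def by blast
  moreover have "a [^] k \<in> L k" using a unfolding L_def by (auto intro!: exI[of _ \<one>])
  ultimately have "a [^] k \<in> L (Suc k)" by blast
  then obtain b where "b \<in> carrier A" "a [^] k = b \<otimes> a [^] Suc k" unfolding L_def by blast
  with pow_Suc have b: "b \<in> carrier A" "a [^] k = (b \<otimes> a) \<otimes> a [^] k" by auto
  have power_regular: "y = \<zero>" if "y \<in> carrier A" "y \<otimes> a [^] m = \<zero>" for y and m :: nat
    using that
  proof (induction m arbitrary: y)
    case (Suc m)
    then have "(y \<otimes> a [^] m) \<otimes> a = \<zero>" using a by (simp add: m_assoc)
    then have "y \<otimes> a [^] m = \<zero>" using regular Suc.prems(1) a by simp
    then show ?case using Suc by blast
  qed simp
  have "(\<one> \<ominus> b \<otimes> a) \<otimes> a [^] k = a [^] k \<ominus> (b \<otimes> a) \<otimes> a [^] k"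
    using a b(1) by (simp add: a_minus_def l_distr l_minus)
  also have "\<dots> = \<zero>" using a by (simp flip: b(2))
  finally have "(\<one> \<ominus> b \<otimes> a) \<otimes> a [^] k = \<zero>" .
  then have "\<one> \<ominus> b \<otimes> a = \<zero>" using power_regular[of "\<one> \<ominus> b \<otimes> a" k] a b(1) by simp
  then have ba: "b \<otimes> a = \<one>" using a b(1) by simp
  have "(a \<otimes> b \<ominus> \<one>) \<otimes> a = \<zero>"
    using a b(1) ba by (simp add: a_minus_def l_distr l_minus m_assoc r_neg)
  then have "a \<otimes> b \<ominus> \<one> = \<zero>" using regular[of "a \<otimes> b \<ominus> \<one>"] a b(1) by simp
  then have "a \<otimes> b = \<one>" using a b(1) by simp
  with ba a b(1) show ?thesis unfolding Units_def by auto
qed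

lemma bij_betw_image_image:
  assumes "inj_on h I" "\<And>i. i \<in> I \<Longrightarrow> f (g i) = h i"
  shows "bij_betw f (g ` I) (h ` I)"
proof (rule bij_betw_imageI)
  show "inj_on f (g ` I)"
  proof (rule inj_onI)
    fix x y assume "x \<in> g ` I" "y \<in> g ` I" "f x = f y"
    then obtain i j where "i \<in> I" "j \<in> I" "x = g i" "y = g j" "h i = h j" using assms(2) by auto
    then show "x = y" using assms(1) unfolding inj_on_def by blast
  qed
  show "f ` g ` I = h ` I" using assms(2) by (auto simp: image_image)
qed

lemma maxDen_l_eqI:
  assumes den: "\<And>i. i \<in> I \<Longrightarrow> left_den_set R (D i)"
    and cover: "\<And>T. left_den_set R T \<Longrightarrow> \<exists>i\<in>I. T \<subseteq> D i"
    and distinct: "\<And>i j. i \<in> I \<Longrightarrow> j \<in> I \<Longrightarrow> D i \<subseteq> D j \<Longrightarrow> i = j"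
  shows "maxDen_l R = D ` I"
proof
  show "maxDen_l R \<subseteq> D ` I"
  proof
    fix T assume "T \<in> maxDen_l R"
    then have T: "left_den_set R T" "\<And>U. left_den_set R U \<Longrightarrow> T \<subseteq> U \<Longrightarrow> U = T"
      unfolding maxDen_l_def by auto
    from cover[OF T(1)] obtain i where "i \<in> I" "T \<subseteq> D i" by blast
    with T(2)[OF den] show "T \<in> D ` I" by blast
  qed
  show "D ` I \<subseteq> maxDen_l R"
  proof
    fix U assume "U \<in> D ` I"
    then obtain i where i: "i \<in> I" "U = D i" by blast
    have "T = D i" if "left_den_set R T" "D i \<subseteq> T" for T
      using cover[OF that(1)] distinct[OF i(1)] that(2) by blast
    with den[OF i(1)] i(2) show "U \<in> maxDen_l R" unfolding maxDen_l_def by blast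
  qed
qed

lemma mult_monoid_gen_least:
  assumes "M \<subseteq> carrier Q" "\<one>\<^bsub>Q\<^esub> \<in> M" "Y \<subseteq> M" "\<And>a b. a \<in> M \<Longrightarrow> b \<in> M \<Longrightarrow> a \<otimes>\<^bsub>Q\<^esub> b \<in> M"
  shows "mult_monoid_gen Q Y \<subseteq> M"
  unfolding mult_monoid_gen_def using assms by (intro Inter_lower) simp

lemma mult_monoid_gen_generator: "y \<in> Y \<Longrightarrow> y \<in> mult_monoid_gen Q Y"
  unfolding mult_monoid_gen_def by blast

lemma mult_monoid_gen_mult:
  assumes "a \<in> mult_monoid_gen Q Y" "b \<in> mult_monoid_gen Q Y"
  shows "a \<otimes>\<^bsub>Q\<^esub> b \<in> mult_monoid_gen Q Y"
  unfolding mult_monoid_gen_def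
proof (rule InterI)
  fix M assume M: "M \<in> {M. M \<subseteq> carrier Q \<and> \<one>\<^bsub>Q\<^esub> \<in> M \<and> Y \<subseteq> M \<and> (\<forall>a\<in>M. \<forall>b\<in>M. a \<otimes>\<^bsub>Q\<^esub> b \<in> M)}"
  then have "a \<in> M" "b \<in> M" using assms unfolding mult_monoid_gen_def by (auto dest: InterD)
  with M show "a \<otimes>\<^bsub>Q\<^esub> b \<in> M" by simp
qed

lemma is_left_localization_regular_inj:
  assumes "is_left_localization R (regular_elems R) Q \<sigma>"
  shows "inj_on \<sigma> (carrier R)"
proof (rule inj_onI)
  interpret ring_hom_ring R Q \<sigma>
    using assms by (intro ring_hom_ringI2) (auto simp: is_left_localization_def)
  fix x y assume xy: "x \<in> carrier R" "y \<in> carrier R" "\<sigma> x = \<sigma> y"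
  then have "\<sigma> (x \<ominus>\<^bsub>R\<^esub> y) = \<zero>\<^bsub>Q\<^esub>" by (simp add: R.minus_eq S.minus_eq S.r_neg)
  moreover have "\<forall>r\<in>carrier R. \<sigma> r = \<zero>\<^bsub>Q\<^esub> \<longrightarrow> (\<exists>s\<in>regular_elems R. s \<otimes>\<^bsub>R\<^esub> r = \<zero>\<^bsub>R\<^esub>)"
    using assms unfolding is_left_localization_def by blast
  ultimately obtain s where "s \<in> regular_elems R" "s \<otimes>\<^bsub>R\<^esub> (x \<ominus>\<^bsub>R\<^esub> y) = \<zero>\<^bsub>R\<^esub>"
    using xy by blast
  then have "x \<ominus>\<^bsub>R\<^esub> y = \<zero>\<^bsub>R\<^esub>" using xy unfolding regular_elems_def by blast
  with xy show "x = y" by simp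
qed

lemma is_left_localization_fraction:
  assumes loc: "is_left_localization R S Q \<sigma>" and q: "q \<in> carrier Q"
  obtains s r where "s \<in> S" "r \<in> carrier R" "q = inv\<^bsub>Q\<^esub> (\<sigma> s) \<otimes>\<^bsub>Q\<^esub> \<sigma> r" "\<sigma> r = \<sigma> s \<otimes>\<^bsub>Q\<^esub> q"
proof -
  interpret ring_hom_ring R Q \<sigma>
    using loc by (intro ring_hom_ringI2) (auto simp: is_left_localization_def)
  obtain s r where sr: "s \<in> S" "r \<in> carrier R" "q = inv\<^bsub>Q\<^esub> (\<sigma> s) \<otimes>\<^bsub>Q\<^esub> \<sigma> r"
    using loc q unfolding is_left_localization_def by blast
  moreover have "\<sigma> s \<in> Units Q" using loc sr(1) unfolding is_left_localization_def by blast
  ultimately have "\<sigma> r = \<sigma> s \<otimes>\<^bsub>Q\<^esub> q" by (simp add: S.m_assoc[symmetric] S.Units_closed)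
  with sr show thesis by (rule that)
qed

lemma left_Ore_set_carrier: "left_Ore_set R T \<Longrightarrow> t \<in> T \<Longrightarrow> t \<in> carrier R"
  unfolding left_Ore_set_def mult_subset_def by blast

section \<open>A simple Artinian ring of left fractions\<close>

definition Units_preimage ::
  "('a, 'm) ring_scheme \<Rightarrow> ('c, 'k) ring_scheme \<Rightarrow> ('a \<Rightarrow> 'c) \<Rightarrow> 'a set" where
  "Units_preimage R A f = {r \<in> carrier R. f r \<in> Units A}"

text \<open>
  In the application \<open>A\<close> is a simple factor of the classical quotient ring, and the witness
  \<open>w\<close> of \<open>kernel_annihilator\<close> is a numerator of the corresponding central idempotent.
\<close>
locale left_fraction_component = ring R for R (structure) +
  fixes A :: "('c, 'k) ring_scheme" and f :: "'a \<Rightarrow> 'c" and C :: "'a set"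
  assumes simple_Artinian: "simple_Artinian A"
    and hom: "f \<in> ring_hom R A"
    and denominators: "submonoid C R"
    and denominators_Ore: "\<And>r c. r \<in> carrier R \<Longrightarrow> c \<in> C \<Longrightarrow> \<exists>c'\<in>C. \<exists>r'\<in>carrier R. c' \<otimes> r = r' \<otimes> c"
    and denominators_Units: "\<And>c. c \<in> C \<Longrightarrow> f c \<in> Units A"
    and left_fractions: "\<And>y. y \<in> carrier A \<Longrightarrow> \<exists>c\<in>C. \<exists>r\<in>carrier R. y = inv\<^bsub>A\<^esub> (f c) \<otimes>\<^bsub>A\<^esub> f r"
    and kernel_annihilator: "\<exists>w\<in>carrier R. f w \<in> Units A \<and> (\<forall>r\<in>carrier R. f r = \<zero>\<^bsub>A\<^esub> \<longrightarrow> w \<otimes> r = \<zero>)"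

sublocale left_fraction_component \<subseteq> A: ring A
  using simple_Artinian by (simp add: simple_Artinian_def simple_ring_def)

sublocale left_fraction_component \<subseteq> ring_hom_ring R A f
  by (intro ring_hom_ringI2 hom) unfold_locales

context left_fraction_component
begin

lemma zero_not_in_Units_A: "\<zero>\<^bsub>A\<^esub> \<notin> Units A"
  using simple_Artinian by (intro A.zero_not_in_Units) (simp add: simple_Artinian_def simple_ring_def)

lemma kernel_annihilator_cancel:
  "\<exists>w\<in>carrier R. f w \<in> Units A \<and>
     (\<forall>x\<in>carrier R. \<forall>y\<in>carrier R. f x = f y \<longrightarrow> w \<otimes> x = w \<otimes> y)"
proof -
  obtain w where w: "w \<in> carrier R" "f w \<in> Units A" "\<And>r. r \<in> carrier R \<Longrightarrow> f r = \<zero>\<^bsub>A\<^esub> \<Longrightarrow> w \<otimes> r = \<zero>"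
    using kernel_annihilator by blast
  have eq: "w \<otimes> x = w \<otimes> y" if "x \<in> carrier R" "y \<in> carrier R" "f x = f y" for x y
  proof -
    have "w \<otimes> (x \<ominus> y) = \<zero>"
      using w(3)[of "x \<ominus> y"] that by (simp add: minus_eq A.minus_eq A.r_neg)
    then have "w \<otimes> x \<ominus> w \<otimes> y = \<zero>" using w that by (simp add: minus_eq r_distr r_minus)
    then show ?thesis using w that by simp
  qed
  with w show ?thesis by blast
qed

lemma denominators_subset_Units_preimage: "C \<subseteq> Units_preimage R A f"
  using denominators denominators_Units unfolding Units_preimage_def submonoid_def by blast

lemma left_den_set_Units_preimage: "left_den_set R (Units_preimage R A f)"
proof -
  obtain w where w: "w \<in> carrier R" "f w \<in> Units A"
    and cancel: "\<And>x y. x \<in> carrier R \<Longrightarrow> y \<in> carrier R \<Longrightarrow> f x = f y \<Longrightarrow> w \<otimes> x = w \<otimes> y"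
    using kernel_annihilator_cancel by blast
  let ?S = "Units_preimage R A f"
  have "mult_subset R ?S"
    using zero_not_in_Units_A unfolding mult_subset_def Units_preimage_def by auto
  moreover have "\<exists>s'\<in>?S. \<exists>r'\<in>carrier R. s' \<otimes> r = r' \<otimes> s" if "r \<in> carrier R" "s \<in> ?S" for r s
  proof -
    have s: "s \<in> carrier R" "f s \<in> Units A" using that(2) by (auto simp: Units_preimage_def)
    have "f r \<otimes>\<^bsub>A\<^esub> inv\<^bsub>A\<^esub> (f s) \<in> carrier A" using that s by simp
    then obtain c u where cu: "c \<in> C" "u \<in> carrier R"
      "f r \<otimes>\<^bsub>A\<^esub> inv\<^bsub>A\<^esub> (f s) = inv\<^bsub>A\<^esub> (f c) \<otimes>\<^bsub>A\<^esub> f u"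
      using left_fractions by blast
    have c: "c \<in> carrier R" "f c \<in> Units A"
      using cu(1) denominators denominators_Units by (auto simp: submonoid_def)
    have "f c \<otimes>\<^bsub>A\<^esub> f r = f c \<otimes>\<^bsub>A\<^esub> (f r \<otimes>\<^bsub>A\<^esub> inv\<^bsub>A\<^esub> (f s)) \<otimes>\<^bsub>A\<^esub> f s"
      using that c s by (simp add: A.m_assoc)
    also have "\<dots> = f c \<otimes>\<^bsub>A\<^esub> (inv\<^bsub>A\<^esub> (f c) \<otimes>\<^bsub>A\<^esub> f u) \<otimes>\<^bsub>A\<^esub> f s"
      by (simp only: cu(3))
    also have "\<dots> = f u \<otimes>\<^bsub>A\<^esub> f s"
      using c s cu by (simp add: A.m_assoc[symmetric])
    finally have "f (c \<otimes> r) = f (u \<otimes> s)" using that c s cu by simp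
    then have "w \<otimes> (c \<otimes> r) = w \<otimes> (u \<otimes> s)"
      using cancel[of "c \<otimes> r" "u \<otimes> s"] that c s cu by simp
    then have "(w \<otimes> c) \<otimes> r = (w \<otimes> u) \<otimes> s"
      using that w c s cu by (simp add: m_assoc)
    moreover have "w \<otimes> c \<in> ?S" using w c by (simp add: Units_preimage_def)
    ultimately show ?thesis using w cu by blast
  qed
  moreover have "\<exists>t\<in>?S. t \<otimes> r = \<zero>" if "r \<in> carrier R" "s \<in> ?S" "r \<otimes> s = \<zero>" for r s
  proof -
    have s: "s \<in> carrier R" "f s \<in> Units A" using that(2) by (auto simp: Units_preimage_def)
    have "f r \<otimes>\<^bsub>A\<^esub> f s = \<zero>\<^bsub>A\<^esub>" using that s by (simp flip: hom_mult)
    then have "f r = f \<zero>" using that s by (simp add: A.mult_Units_eq_zero_iff)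
    then have "w \<otimes> r = \<zero>" using cancel[of r \<zero>] that w by simp
    then show ?thesis using w by (auto simp: Units_preimage_def)
  qed
  ultimately show ?thesis unfolding left_den_set_def left_Ore_set_def by blast
qed

lemma is_left_localization_Units_preimage: "is_left_localization R (Units_preimage R A f) A f"
proof -
  obtain w where w: "w \<in> carrier R" "f w \<in> Units A"
    and cancel: "\<And>x y. x \<in> carrier R \<Longrightarrow> y \<in> carrier R \<Longrightarrow> f x = f y \<Longrightarrow> w \<otimes> x = w \<otimes> y"
    using kernel_annihilator_cancel by blast
  have "f r = \<zero>\<^bsub>A\<^esub> \<longleftrightarrow> (\<exists>s\<in>Units_preimage R A f. s \<otimes> r = \<zero>)" if r: "r \<in> carrier R" for r
  proof
    assume "f r = \<zero>\<^bsub>A\<^esub>"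
    then have "w \<otimes> r = \<zero>" using cancel[of r \<zero>] r w by simp
    then show "\<exists>s\<in>Units_preimage R A f. s \<otimes> r = \<zero>" using w by (auto simp: Units_preimage_def)
  next
    assume "\<exists>s\<in>Units_preimage R A f. s \<otimes> r = \<zero>"
    then obtain s where "s \<in> carrier R" "f s \<in> Units A" "f s \<otimes>\<^bsub>A\<^esub> f r = \<zero>\<^bsub>A\<^esub>"
      using r by (auto simp: Units_preimage_def simp flip: hom_mult)
    then show "f r = \<zero>\<^bsub>A\<^esub>" using r by (simp add: A.Units_mult_eq_zero_iff)
  qed
  moreover have "\<exists>s\<in>Units_preimage R A f. \<exists>r\<in>carrier R. y = inv\<^bsub>A\<^esub> (f s) \<otimes>\<^bsub>A\<^esub> f r"
    if "y \<in> carrier A" for y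
    using left_fractions[OF that] denominators_subset_Units_preimage by blast
  ultimately show ?thesis
    unfolding is_left_localization_def
    using ring_axioms A.ring_axioms left_den_set_Units_preimage hom
    by (simp add: Units_preimage_def)
qed

definition torsion :: "'a set \<Rightarrow> 'c set" where
  "torsion T = {z \<in> carrier A. \<exists>t\<in>T. f t \<otimes>\<^bsub>A\<^esub> z = \<zero>\<^bsub>A\<^esub>}"

text \<open>
  The torsion is only a right ideal stable under \<open>f(R)\<close>; admitting a denominator \<open>f(c)\<close> in
  front makes it a two-sided ideal of \<open>A\<close>.
\<close>
definition torsion_ideal :: "'a set \<Rightarrow> 'c set" where
  "torsion_ideal T = {x \<in> carrier A. \<exists>c\<in>C. f c \<otimes>\<^bsub>A\<^esub> x \<in> torsion T}"

context
  fixes T assumes T: "left_Ore_set R T"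
begin

lemma torsion_hom_mult:
  assumes "r \<in> carrier R" "z \<in> torsion T"
  shows "f r \<otimes>\<^bsub>A\<^esub> z \<in> torsion T"
proof -
  obtain t where t: "t \<in> T" "f t \<otimes>\<^bsub>A\<^esub> z = \<zero>\<^bsub>A\<^esub>" "z \<in> carrier A"
    using assms(2) unfolding torsion_def by blast
  obtain t' r' where tr: "t' \<in> T" "r' \<in> carrier R" "t' \<otimes> r = r' \<otimes> t"
    using T assms(1) t(1) unfolding left_Ore_set_def by blast
  have "f t' \<otimes>\<^bsub>A\<^esub> (f r \<otimes>\<^bsub>A\<^esub> z) = f (t' \<otimes> r) \<otimes>\<^bsub>A\<^esub> z"
    using assms(1) t(3) tr(1) left_Ore_set_carrier[OF T] by (simp add: A.m_assoc)
  also have "\<dots> = f r' \<otimes>\<^bsub>A\<^esub> (f t \<otimes>\<^bsub>A\<^esub> z)"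
    unfolding tr(3) using t(1,3) tr(2) left_Ore_set_carrier[OF T] by (simp add: A.m_assoc)
  also have "\<dots> = \<zero>\<^bsub>A\<^esub>" using t(2) tr(2) by simp
  finally have "f t' \<otimes>\<^bsub>A\<^esub> (f r \<otimes>\<^bsub>A\<^esub> z) = \<zero>\<^bsub>A\<^esub>" .
  moreover have "f r \<otimes>\<^bsub>A\<^esub> z \<in> carrier A" using assms(1) t(3) by simp
  ultimately show ?thesis using tr(1) unfolding torsion_def by blast
qed

lemma torsion_add:
  assumes "z \<in> torsion T" "z' \<in> torsion T"
  shows "z \<oplus>\<^bsub>A\<^esub> z' \<in> torsion T"
proof -
  obtain t t' where t: "t \<in> T" "f t \<otimes>\<^bsub>A\<^esub> z = \<zero>\<^bsub>A\<^esub>" "z \<in> carrier A"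
    and t': "t' \<in> T" "f t' \<otimes>\<^bsub>A\<^esub> z' = \<zero>\<^bsub>A\<^esub>" "z' \<in> carrier A"
    using assms unfolding torsion_def by blast
  obtain s u where su: "s \<in> T" "u \<in> carrier R" "s \<otimes> t = u \<otimes> t'"
    using T t(1) t'(1) left_Ore_set_carrier[OF T] unfolding left_Ore_set_def by blast
  have "f (s \<otimes> t) \<otimes>\<^bsub>A\<^esub> z = \<zero>\<^bsub>A\<^esub>"
    using t su(1) left_Ore_set_carrier[OF T] by (simp add: A.m_assoc)
  moreover have "f (s \<otimes> t) \<otimes>\<^bsub>A\<^esub> z' = \<zero>\<^bsub>A\<^esub>"
    unfolding su(3) using t' su(2) left_Ore_set_carrier[OF T] by (simp add: A.m_assoc)
  ultimately have "f (s \<otimes> t) \<otimes>\<^bsub>A\<^esub> (z \<oplus>\<^bsub>A\<^esub> z') = \<zero>\<^bsub>A\<^esub>"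
    using t(1,3) t'(3) su(1) left_Ore_set_carrier[OF T] by (simp add: A.r_distr del: hom_mult)
  moreover have "s \<otimes> t \<in> T" using T su(1) t(1) unfolding left_Ore_set_def mult_subset_def by blast
  moreover have "z \<oplus>\<^bsub>A\<^esub> z' \<in> carrier A" using t(3) t'(3) by simp
  ultimately show ?thesis unfolding torsion_def by blast
qed

lemma torsion_mult:
  assumes "z \<in> torsion T" "y \<in> carrier A"
  shows "z \<otimes>\<^bsub>A\<^esub> y \<in> torsion T"
proof -
  obtain t where t: "t \<in> T" "f t \<otimes>\<^bsub>A\<^esub> z = \<zero>\<^bsub>A\<^esub>" "z \<in> carrier A"
    using assms(1) unfolding torsion_def by blast
  then have "f t \<otimes>\<^bsub>A\<^esub> (z \<otimes>\<^bsub>A\<^esub> y) = \<zero>\<^bsub>A\<^esub>"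
    using assms(2) left_Ore_set_carrier[OF T] by (simp flip: A.m_assoc)
  moreover have "z \<otimes>\<^bsub>A\<^esub> y \<in> carrier A" using t(3) assms(2) by simp
  ultimately show ?thesis using t(1) unfolding torsion_def by blast
qed

lemma zero_in_torsion_ideal: "\<zero>\<^bsub>A\<^esub> \<in> torsion_ideal T"
proof -
  have "\<one> \<in> T" using T unfolding left_Ore_set_def mult_subset_def by blast
  then have "\<zero>\<^bsub>A\<^esub> \<in> torsion T" unfolding torsion_def using left_Ore_set_carrier[OF T] by force
  moreover have "\<one> \<in> C" "f \<one> \<otimes>\<^bsub>A\<^esub> \<zero>\<^bsub>A\<^esub> = \<zero>\<^bsub>A\<^esub>"
    using denominators by (simp_all add: submonoid.one_closed)
  ultimately show ?thesis unfolding torsion_ideal_def by force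
qed

lemma torsion_ideal_mult_right:
  assumes x: "x \<in> torsion_ideal T" and y: "y \<in> carrier A"
  shows "x \<otimes>\<^bsub>A\<^esub> y \<in> torsion_ideal T"
proof -
  obtain c where c: "c \<in> C" "f c \<otimes>\<^bsub>A\<^esub> x \<in> torsion T" "x \<in> carrier A"
    using x unfolding torsion_ideal_def by blast
  have "f c \<otimes>\<^bsub>A\<^esub> (x \<otimes>\<^bsub>A\<^esub> y) = (f c \<otimes>\<^bsub>A\<^esub> x) \<otimes>\<^bsub>A\<^esub> y"
    using c(1,3) y denominators_Units by (simp add: A.m_assoc A.Units_closed)
  then have "f c \<otimes>\<^bsub>A\<^esub> (x \<otimes>\<^bsub>A\<^esub> y) \<in> torsion T" using torsion_mult[OF c(2) y] by simp
  moreover have "x \<otimes>\<^bsub>A\<^esub> y \<in> carrier A" using c(3) y by simp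
  ultimately show ?thesis using c(1) unfolding torsion_ideal_def by blast
qed

lemma torsion_ideal_add:
  assumes x: "x \<in> torsion_ideal T" and x': "x' \<in> torsion_ideal T"
  shows "x \<oplus>\<^bsub>A\<^esub> x' \<in> torsion_ideal T"
proof -
  obtain c c' where c: "c \<in> C" "f c \<otimes>\<^bsub>A\<^esub> x \<in> torsion T" "x \<in> carrier A"
    and c': "c' \<in> C" "f c' \<otimes>\<^bsub>A\<^esub> x' \<in> torsion T" "x' \<in> carrier A"
    using x x' unfolding torsion_ideal_def by blast
  have cR: "c \<in> carrier R" "c' \<in> carrier R"
    using c(1) c'(1) denominators by (auto simp: submonoid_def)
  obtain d r where dr: "d \<in> C" "r \<in> carrier R" "d \<otimes> c = r \<otimes> c'"
    using denominators_Ore[OF cR(1) c'(1)] by blast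
  have dR: "d \<in> carrier R" using dr(1) denominators by (auto simp: submonoid_def)
  have "f (d \<otimes> c) \<otimes>\<^bsub>A\<^esub> (x \<oplus>\<^bsub>A\<^esub> x')
      = f (d \<otimes> c) \<otimes>\<^bsub>A\<^esub> x \<oplus>\<^bsub>A\<^esub> f (r \<otimes> c') \<otimes>\<^bsub>A\<^esub> x'"
    using c(3) c'(3) cR dR by (simp add: A.r_distr flip: dr(3) del: hom_mult)
  also have "\<dots> = f d \<otimes>\<^bsub>A\<^esub> (f c \<otimes>\<^bsub>A\<^esub> x) \<oplus>\<^bsub>A\<^esub> f r \<otimes>\<^bsub>A\<^esub> (f c' \<otimes>\<^bsub>A\<^esub> x')"
    using c(3) c'(3) cR dR dr(2) by (simp add: A.m_assoc)
  finally have "f (d \<otimes> c) \<otimes>\<^bsub>A\<^esub> (x \<oplus>\<^bsub>A\<^esub> x') \<in> torsion T"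
    using torsion_add torsion_hom_mult c(2) c'(2) dR dr(2) by simp
  moreover have "d \<otimes> c \<in> C" using dr(1) c(1) denominators by (simp add: submonoid.m_closed)
  moreover have "x \<oplus>\<^bsub>A\<^esub> x' \<in> carrier A" using c(3) c'(3) by simp
  ultimately show ?thesis unfolding torsion_ideal_def by blast
qed

lemma torsion_ideal_mult_left:
  assumes x: "x \<in> torsion_ideal T" and y: "y \<in> carrier A"
  shows "y \<otimes>\<^bsub>A\<^esub> x \<in> torsion_ideal T"
proof -
  obtain c where c: "c \<in> C" "f c \<otimes>\<^bsub>A\<^esub> x \<in> torsion T" "x \<in> carrier A"
    using x unfolding torsion_ideal_def by blast
  have fc: "f c \<in> Units A" using c(1) denominators_Units by blast
  have "y \<otimes>\<^bsub>A\<^esub> inv\<^bsub>A\<^esub> (f c) \<in> carrier A" using y fc by simp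
  then obtain c' r where cr: "c' \<in> C" "r \<in> carrier R"
    "y \<otimes>\<^bsub>A\<^esub> inv\<^bsub>A\<^esub> (f c) = inv\<^bsub>A\<^esub> (f c') \<otimes>\<^bsub>A\<^esub> f r"
    using left_fractions by blast
  have fc': "f c' \<in> Units A" using cr(1) denominators_Units by blast
  have "inv\<^bsub>A\<^esub> (f c) \<otimes>\<^bsub>A\<^esub> (f c \<otimes>\<^bsub>A\<^esub> x) = x"
    using fc c(3) by (simp add: A.m_assoc[symmetric] A.Units_closed)
  then have "f c' \<otimes>\<^bsub>A\<^esub> (y \<otimes>\<^bsub>A\<^esub> x)
      = f c' \<otimes>\<^bsub>A\<^esub> ((y \<otimes>\<^bsub>A\<^esub> inv\<^bsub>A\<^esub> (f c)) \<otimes>\<^bsub>A\<^esub> (f c \<otimes>\<^bsub>A\<^esub> x))"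
    using fc c(3) y by (simp add: A.m_assoc A.Units_closed)
  also have "\<dots> = f r \<otimes>\<^bsub>A\<^esub> (f c \<otimes>\<^bsub>A\<^esub> x)"
    unfolding cr(3) using fc fc' c(3) cr(2) by (simp add: A.m_assoc[symmetric] A.Units_closed)
  finally have "f c' \<otimes>\<^bsub>A\<^esub> (y \<otimes>\<^bsub>A\<^esub> x) \<in> torsion T"
    using torsion_hom_mult[OF cr(2) c(2)] by simp
  moreover have "y \<otimes>\<^bsub>A\<^esub> x \<in> carrier A" using y c(3) by simp
  ultimately show ?thesis using cr(1) unfolding torsion_ideal_def by blast
qed

lemma ideal_torsion_ideal: "ideal (torsion_ideal T) A"
proof (intro idealI A.ring_axioms A.add.subgroupI)
  show "torsion_ideal T \<subseteq> carrier A" unfolding torsion_ideal_def by blast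
  show "torsion_ideal T \<noteq> {}" using zero_in_torsion_ideal by blast
  show "\<ominus>\<^bsub>A\<^esub> x \<in> torsion_ideal T" if x: "x \<in> torsion_ideal T" for x
  proof -
    have "x \<in> carrier A" using x unfolding torsion_ideal_def by blast
    then have "\<ominus>\<^bsub>A\<^esub> x = x \<otimes>\<^bsub>A\<^esub> \<ominus>\<^bsub>A\<^esub> \<one>\<^bsub>A\<^esub>" by (simp add: A.r_minus)
    then show ?thesis using torsion_ideal_mult_right[OF x] by simp
  qed
qed (auto intro: torsion_ideal_add torsion_ideal_mult_left torsion_ideal_mult_right)

end

lemma torsion_subset_zero:
  assumes T: "left_Ore_set R T" and nonzero: "\<And>t. t \<in> T \<Longrightarrow> f t \<noteq> \<zero>\<^bsub>A\<^esub>"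
  shows "torsion T \<subseteq> {\<zero>\<^bsub>A\<^esub>}"
proof -
  have "\<one>\<^bsub>A\<^esub> \<notin> torsion_ideal T"
  proof
    assume "\<one>\<^bsub>A\<^esub> \<in> torsion_ideal T"
    then obtain c t where c: "c \<in> C" and t: "t \<in> T" "f t \<otimes>\<^bsub>A\<^esub> (f c \<otimes>\<^bsub>A\<^esub> \<one>\<^bsub>A\<^esub>) = \<zero>\<^bsub>A\<^esub>"
      unfolding torsion_ideal_def torsion_def by blast
    have "f c \<in> Units A" using c denominators_Units by blast
    with t have "f t = \<zero>\<^bsub>A\<^esub>"
      using left_Ore_set_carrier[OF T] by (simp add: A.mult_Units_eq_zero_iff A.Units_closed)
    with t(1) nonzero show False by blast
  qed
  then have "torsion_ideal T = {\<zero>\<^bsub>A\<^esub>}"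
    using ideal_torsion_ideal[OF T] simple_Artinian
    unfolding simple_Artinian_def simple_ring_def by blast
  moreover have "torsion T \<subseteq> torsion_ideal T"
  proof
    fix z assume z: "z \<in> torsion T"
    moreover have "z \<in> carrier A" using z unfolding torsion_def by blast
    moreover have "\<one> \<in> C" using denominators by (simp add: submonoid.one_closed)
    ultimately show "z \<in> torsion_ideal T" unfolding torsion_ideal_def by force
  qed
  ultimately show ?thesis by blast
qed

lemma Units_preimage_dichotomy:
  assumes T: "left_den_set R T"
  shows "T \<subseteq> Units_preimage R A f \<or> (\<exists>t\<in>T. f t = \<zero>\<^bsub>A\<^esub>)"
proof (rule disjCI)
  assume "\<not> (\<exists>t\<in>T. f t = \<zero>\<^bsub>A\<^esub>)"
  moreover have Ore: "left_Ore_set R T" using T unfolding left_den_set_def by blast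
  ultimately have torsion: "torsion T \<subseteq> {\<zero>\<^bsub>A\<^esub>}" by (intro torsion_subset_zero) auto
  obtain w where w: "w \<in> carrier R" "f w \<in> Units A"
    and cancel: "\<And>x y. x \<in> carrier R \<Longrightarrow> y \<in> carrier R \<Longrightarrow> f x = f y \<Longrightarrow> w \<otimes> x = w \<otimes> y"
    using kernel_annihilator_cancel by blast
  show "T \<subseteq> Units_preimage R A f"
  proof
    fix t assume t: "t \<in> T"
    have tR: "t \<in> carrier R" using left_Ore_set_carrier[OF Ore t] .
    \<comment> \<open>\<open>f t\<close> is not a right zero divisor, hence a unit of the left Artinian ring \<open>A\<close>\<close>
    have "x = \<zero>\<^bsub>A\<^esub>" if x: "x \<in> carrier A" "x \<otimes>\<^bsub>A\<^esub> f t = \<zero>\<^bsub>A\<^esub>" for x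
    proof -
      obtain c r where cr: "c \<in> C" "r \<in> carrier R" "x = inv\<^bsub>A\<^esub> (f c) \<otimes>\<^bsub>A\<^esub> f r"
        using left_fractions[OF x(1)] by blast
      have fc: "f c \<in> Units A" using cr(1) denominators_Units by blast
      have "f r = f c \<otimes>\<^bsub>A\<^esub> x"
        using fc cr(2,3) by (simp add: A.m_assoc[symmetric] A.Units_closed)
      then have "f (r \<otimes> t) = f \<zero>"
        using fc x tR cr(2) by (simp add: A.m_assoc A.Units_closed)
      then have "(w \<otimes> r) \<otimes> t = \<zero>"
        using cancel[of "r \<otimes> t" \<zero>] w cr(2) tR by (simp add: m_assoc)
      then obtain t' where t': "t' \<in> T" "t' \<otimes> (w \<otimes> r) = \<zero>"
        using T t w cr(2) unfolding left_den_set_def by blast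
      have "f t' \<otimes>\<^bsub>A\<^esub> f (w \<otimes> r) = f (t' \<otimes> (w \<otimes> r))"
        using t'(1) w cr(2) left_Ore_set_carrier[OF Ore] by simp
      with t' have "f (w \<otimes> r) \<in> torsion T"
        using w cr(2) unfolding torsion_def by auto
      then have "f w \<otimes>\<^bsub>A\<^esub> f r = \<zero>\<^bsub>A\<^esub>" using torsion w cr(2) by auto
      then have "f r = \<zero>\<^bsub>A\<^esub>" using w cr(2) by (simp add: A.Units_mult_eq_zero_iff)
      then show ?thesis using cr(3) fc by (simp add: A.Units_closed)
    qed
    then have "f t \<in> Units A"
      using simple_Artinian tR unfolding simple_Artinian_def by (intro left_Artinian_right_regular_imp_Units) auto
    then show "t \<in> Units_preimage R A f" using tR by (simp add: Units_preimage_def)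
  qed
qed

end

section \<open>Finitely many simple Artinian components\<close>

locale fraction_components = ring R for R (structure) +
  fixes I :: "'i set" and A :: "'i \<Rightarrow> ('c, 'k) ring_scheme"
    and \<phi> :: "'i \<Rightarrow> 'a \<Rightarrow> 'c" and C :: "'a set"
  assumes finite_index: "finite I"
    and simple_Artinian: "\<And>i. i \<in> I \<Longrightarrow> simple_Artinian (A i)"
    and hom: "\<And>i. i \<in> I \<Longrightarrow> \<phi> i \<in> ring_hom R (A i)"
    and denominators: "submonoid C R"
    and denominators_Ore: "\<And>r c. r \<in> carrier R \<Longrightarrow> c \<in> C \<Longrightarrow> \<exists>c'\<in>C. \<exists>r'\<in>carrier R. c' \<otimes> r = r' \<otimes> c"
    and denominators_Units: "\<And>i c. i \<in> I \<Longrightarrow> c \<in> C \<Longrightarrow> \<phi> i c \<in> Units (A i)"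
    and left_fractions: "\<And>i y. i \<in> I \<Longrightarrow> y \<in> carrier (A i) \<Longrightarrow>
      \<exists>c\<in>C. \<exists>r\<in>carrier R. y = inv\<^bsub>A i\<^esub> (\<phi> i c) \<otimes>\<^bsub>A i\<^esub> \<phi> i r"
    and components_eqI: "\<And>x y. x \<in> carrier R \<Longrightarrow> y \<in> carrier R \<Longrightarrow>
      (\<And>i. i \<in> I \<Longrightarrow> \<phi> i x = \<phi> i y) \<Longrightarrow> x = y"
    and component_support: "\<And>i. i \<in> I \<Longrightarrow>
      \<exists>w\<in>carrier R. \<phi> i w \<in> Units (A i) \<and> (\<forall>j\<in>I. j \<noteq> i \<longrightarrow> \<phi> j w = \<zero>\<^bsub>A j\<^esub>)"

context fraction_components
begin

lemma ring_hom_ring_component: "i \<in> I \<Longrightarrow> ring_hom_ring R (A i) (\<phi> i)"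
  using simple_Artinian hom ring_axioms
  by (intro ring_hom_ringI2) (auto simp: simple_Artinian_def simple_ring_def)

lemma left_fraction_component:
  assumes i: "i \<in> I"
  shows "left_fraction_component R (A i) (\<phi> i) C"
proof (intro left_fraction_component.intro left_fraction_component_axioms.intro ring_axioms
    simple_Artinian[OF i] hom[OF i] denominators denominators_Ore denominators_Units[OF i]
    left_fractions[OF i])
  obtain w where w: "w \<in> carrier R" "\<phi> i w \<in> Units (A i)"
    and support: "\<And>j. j \<in> I \<Longrightarrow> j \<noteq> i \<Longrightarrow> \<phi> j w = \<zero>\<^bsub>A j\<^esub>"
    using component_support[OF i] by blast
  have "w \<otimes> r = \<zero>" if r: "r \<in> carrier R" "\<phi> i r = \<zero>\<^bsub>A i\<^esub>" for r
  proof (rule components_eqI)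
    fix j assume j: "j \<in> I"
    interpret ring_hom_ring R "A j" "\<phi> j" using ring_hom_ring_component[OF j] .
    have "\<phi> j w = \<zero>\<^bsub>A j\<^esub> \<or> \<phi> j r = \<zero>\<^bsub>A j\<^esub>" using support[OF j] r(2) by (cases "j = i") auto
    then show "\<phi> j (w \<otimes> r) = \<phi> j \<zero>" using w r by auto
  qed (use w r in simp_all)
  then show "\<exists>w\<in>carrier R. \<phi> i w \<in> Units (A i) \<and> (\<forall>r\<in>carrier R. \<phi> i r = \<zero>\<^bsub>A i\<^esub> \<longrightarrow> w \<otimes> r = \<zero>)"
    using w by blast
qed

lemma exists_common_zero:
  assumes T: "submonoid T R" and J: "J \<subseteq> I"
    and zero: "\<And>j. j \<in> J \<Longrightarrow> \<exists>t\<in>T. \<phi> j t = \<zero>\<^bsub>A j\<^esub>"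
  shows "\<exists>t\<in>T. \<forall>j\<in>J. \<phi> j t = \<zero>\<^bsub>A j\<^esub>"
  using finite_subset[OF J finite_index] J zero
proof (induction J rule: finite_induct)
  case empty
  then show ?case using submonoid.one_closed[OF T] by blast
next
  case (insert j J)
  obtain t where t: "t \<in> T" "\<forall>k\<in>J. \<phi> k t = \<zero>\<^bsub>A k\<^esub>"
    using insert.IH insert.prems by auto
  obtain s where s: "s \<in> T" "\<phi> j s = \<zero>\<^bsub>A j\<^esub>"
    using insert.prems(2)[of j] by auto
  have "\<phi> k (t \<otimes> s) = \<zero>\<^bsub>A k\<^esub>" if k: "k \<in> insert j J" for k
  proof -
    interpret ring_hom_ring R "A k" "\<phi> k" using ring_hom_ring_component k insert.prems(1) by blast
    have "\<phi> k t = \<zero>\<^bsub>A k\<^esub> \<or> \<phi> k s = \<zero>\<^bsub>A k\<^esub>" using t(2) s(2) k by auto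
    then show ?thesis using t(1) s(1) submonoid.mem_carrier[OF T] by auto
  qed
  moreover have "t \<otimes> s \<in> T" using t(1) s(1) submonoid.m_closed[OF T] by blast
  ultimately show ?case by blast
qed

lemma left_den_set_subset_Units_preimage:
  assumes T: "left_den_set R T"
  shows "\<exists>i\<in>I. T \<subseteq> Units_preimage R (A i) (\<phi> i)"
proof (rule ccontr)
  assume "\<not> ?thesis"
  then have "\<exists>t\<in>T. \<phi> i t = \<zero>\<^bsub>A i\<^esub>" if "i \<in> I" for i
    using left_fraction_component.Units_preimage_dichotomy[OF left_fraction_component T] that
    by blast
  moreover have mult: "mult_subset R T"
    using T unfolding left_den_set_def left_Ore_set_def by blast
  then have "submonoid T R" unfolding mult_subset_def submonoid_def by blast
  ultimately obtain t where t: "t \<in> T" "\<And>i. i \<in> I \<Longrightarrow> \<phi> i t = \<zero>\<^bsub>A i\<^esub>"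
    using exists_common_zero[of T I] by blast
  have "t = \<zero>"
  proof (rule components_eqI)
    fix i assume i: "i \<in> I"
    interpret ring_hom_ring R "A i" "\<phi> i" using ring_hom_ring_component[OF i] .
    show "\<phi> i t = \<phi> i \<zero>" using t(2)[OF i] by simp
  qed (use t(1) mult in \<open>auto simp: mult_subset_def\<close>)
  with t(1) mult show False unfolding mult_subset_def by blast
qed

lemma Units_preimage_subset_imp_eq:
  assumes "i \<in> I" "j \<in> I" "Units_preimage R (A i) (\<phi> i) \<subseteq> Units_preimage R (A j) (\<phi> j)"
  shows "i = j"
proof (rule ccontr)
  assume "i \<noteq> j"
  obtain w where w: "w \<in> carrier R" "\<phi> i w \<in> Units (A i)" "\<forall>k\<in>I. k \<noteq> i \<longrightarrow> \<phi> k w = \<zero>\<^bsub>A k\<^esub>"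
    using component_support[OF assms(1)] by blast
  then have "w \<in> Units_preimage R (A j) (\<phi> j)" using assms(3) unfolding Units_preimage_def by blast
  moreover have "\<phi> j w = \<zero>\<^bsub>A j\<^esub>" using w(3) assms(2) \<open>i \<noteq> j\<close> by auto
  ultimately show False
    using left_fraction_component.zero_not_in_Units_A[OF left_fraction_component[OF assms(2)]]
    unfolding Units_preimage_def by simp
qed

lemma inj_on_Units_preimage: "inj_on (\<lambda>i. Units_preimage R (A i) (\<phi> i)) I"
  by (intro inj_onI) (simp add: Units_preimage_subset_imp_eq)

theorem maxDen_l_eq: "maxDen_l R = (\<lambda>i. Units_preimage R (A i) (\<phi> i)) ` I"
  by (intro maxDen_l_eqI left_fraction_component.left_den_set_Units_preimage[OF left_fraction_component]
      left_den_set_subset_Units_preimage Units_preimage_subset_imp_eq)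

end

section \<open>The classical left quotient ring as a product\<close>

locale simple_Artinian_product = ring Q for Q (structure) +
  fixes I :: "'i set" and A :: "'i \<Rightarrow> ('c, 'k) ring_scheme" and \<pi> :: "'i \<Rightarrow> 'a \<Rightarrow> 'c"
  assumes finite_index: "finite I"
    and simple_Artinian: "\<And>i. i \<in> I \<Longrightarrow> simple_Artinian (A i)"
    and proj_hom: "\<And>i. i \<in> I \<Longrightarrow> \<pi> i \<in> ring_hom Q (A i)"
    and product: "bij_betw (\<lambda>q. \<lambda>i\<in>I. \<pi> i q) (carrier Q) (PiE I (\<lambda>i. carrier (A i)))"

context simple_Artinian_product
begin

lemma ring_hom_ring_proj: "i \<in> I \<Longrightarrow> ring_hom_ring Q (A i) (\<pi> i)"
  using simple_Artinian proj_hom ring_axioms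
  by (intro ring_hom_ringI2) (auto simp: simple_Artinian_def simple_ring_def)

lemma proj_eqI:
  assumes "x \<in> carrier Q" "y \<in> carrier Q" "\<And>i. i \<in> I \<Longrightarrow> \<pi> i x = \<pi> i y"
  shows "x = y"
proof -
  have "(\<lambda>i\<in>I. \<pi> i x) = (\<lambda>i\<in>I. \<pi> i y)" using assms(3) by auto
  then show ?thesis using product assms(1,2) unfolding bij_betw_def inj_on_def by blast
qed

lemma exists_single:
  assumes i: "i \<in> I" and a: "a \<in> carrier (A i)"
  shows "\<exists>q\<in>carrier Q. \<pi> i q = a \<and> (\<forall>j\<in>I. j \<noteq> i \<longrightarrow> \<pi> j q = \<zero>\<^bsub>A j\<^esub>)"
proof -
  let ?g = "\<lambda>j\<in>I. if j = i then a else \<zero>\<^bsub>A j\<^esub>"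
  have "?g \<in> PiE I (\<lambda>j. carrier (A j))"
    using a ring_hom_ring_proj by (auto simp: ring_hom_ring_def ring.ring_simprules(2))
  then obtain q where q: "q \<in> carrier Q" "(\<lambda>j\<in>I. \<pi> j q) = ?g"
    using product unfolding bij_betw_def by (metis (no_types, lifting) imageE)
  have "\<pi> j q = (if j = i then a else \<zero>\<^bsub>A j\<^esub>)" if "j \<in> I" for j
    using fun_cong[OF q(2), of j] that by simp
  with i q(1) show ?thesis by (intro bexI[of _ q]) auto
qed

text \<open>\<open>Q\<close> is its own ring of left fractions, with trivial denominators.\<close>
sublocale components: fraction_components Q I A \<pi> "{\<one>}"
proof (intro fraction_components.intro fraction_components_axioms.intro ring_axioms)
  show "submonoid {\<one>} Q" by (auto intro: submonoid.intro)
  show "\<pi> i c \<in> Units (A i)" if "i \<in> I" "c \<in> {\<one>}" for i c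
  proof -
    interpret ring_hom_ring Q "A i" "\<pi> i" using ring_hom_ring_proj[OF that(1)] .
    show ?thesis using that(2) by simp
  qed
  show "\<exists>c\<in>{\<one>}. \<exists>r\<in>carrier Q. y = inv\<^bsub>A i\<^esub> (\<pi> i c) \<otimes>\<^bsub>A i\<^esub> \<pi> i r"
    if i: "i \<in> I" and y: "y \<in> carrier (A i)" for i y
  proof -
    interpret ring_hom_ring Q "A i" "\<pi> i" using ring_hom_ring_proj[OF i] .
    obtain q where "q \<in> carrier Q" "\<pi> i q = y" using exists_single[OF i y] by blast
    then show ?thesis using y by auto
  qed
  show "\<exists>w\<in>carrier Q. \<pi> i w \<in> Units (A i) \<and> (\<forall>j\<in>I. j \<noteq> i \<longrightarrow> \<pi> j w = \<zero>\<^bsub>A j\<^esub>)"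
    if i: "i \<in> I" for i
  proof -
    interpret ring_hom_ring Q "A i" "\<pi> i" using ring_hom_ring_proj[OF i] .
    obtain q where "q \<in> carrier Q" "\<pi> i q = \<one>\<^bsub>A i\<^esub>" "\<forall>j\<in>I. j \<noteq> i \<longrightarrow> \<pi> j q = \<zero>\<^bsub>A j\<^esub>"
      using exists_single[OF i S.one_closed] by blast
    then show ?thesis by (intro bexI[of _ q]) auto
  qed
qed (auto intro: finite_index simple_Artinian proj_hom proj_eqI)

lemma localization_numerator:
  fixes R :: "('r, 'm) ring_scheme" and \<sigma> :: "'r \<Rightarrow> 'a"
  assumes loc: "is_left_localization R (regular_elems R) Q \<sigma>" and q: "q \<in> carrier Q"
  obtains c r where "c \<in> regular_elems R" "r \<in> carrier R" "q = inv (\<sigma> c) \<otimes> \<sigma> r"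
    "\<forall>j\<in>I. \<pi> j q \<in> Units (A j) \<longrightarrow> \<pi> j (\<sigma> r) \<in> Units (A j)"
    "\<forall>j\<in>I. \<pi> j q = \<zero>\<^bsub>A j\<^esub> \<longrightarrow> \<pi> j (\<sigma> r) = \<zero>\<^bsub>A j\<^esub>"
proof -
  obtain c r where cr: "c \<in> regular_elems R" "r \<in> carrier R"
    "q = inv (\<sigma> c) \<otimes> \<sigma> r" "\<sigma> r = \<sigma> c \<otimes> q"
    using is_left_localization_fraction[OF loc q] by blast
  have c: "\<sigma> c \<in> Units Q" using loc cr(1) unfolding is_left_localization_def by blast
  then have cQ: "\<sigma> c \<in> carrier Q" by (rule Units_closed)
  have "(\<pi> j q \<in> Units (A j) \<longrightarrow> \<pi> j (\<sigma> r) \<in> Units (A j)) \<and>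
      (\<pi> j q = \<zero>\<^bsub>A j\<^esub> \<longrightarrow> \<pi> j (\<sigma> r) = \<zero>\<^bsub>A j\<^esub>)" if j: "j \<in> I" for j
  proof -
    interpret ring_hom_ring Q "A j" "\<pi> j" using ring_hom_ring_proj[OF j] .
    have "\<pi> j (\<sigma> r) = \<pi> j (\<sigma> c) \<otimes>\<^bsub>A j\<^esub> \<pi> j q" using cr(4) cQ q by simp
    moreover have "\<pi> j (\<sigma> c) \<in> Units (A j)" using hom_Units(1)[OF c] .
    ultimately show ?thesis by (auto simp: S.Units_closed)
  qed
  then show thesis by (intro that[OF cr(1-3)]) auto
qed

lemma fraction_components_of_localization:
  fixes R :: "('r, 'm) ring_scheme" and \<sigma> :: "'r \<Rightarrow> 'a"
  assumes loc: "is_left_localization R (regular_elems R) Q \<sigma>"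
  shows "fraction_components R I A (\<lambda>i r. \<pi> i (\<sigma> r)) (regular_elems R)"
proof -
  interpret \<sigma>: ring_hom_ring R Q \<sigma>
    using loc by (intro ring_hom_ringI2) (auto simp: is_left_localization_def)
  have den: "left_den_set R (regular_elems R)"
    and units: "\<And>c. c \<in> regular_elems R \<Longrightarrow> \<sigma> c \<in> Units Q"
    using loc unfolding is_left_localization_def by auto
  have proj_units: "\<pi> i (\<sigma> c) \<in> Units (A i)" "\<pi> i (inv (\<sigma> c)) = inv\<^bsub>A i\<^esub> (\<pi> i (\<sigma> c))"
    if "i \<in> I" "c \<in> regular_elems R" for i c
    using ring_hom_ring.hom_Units[OF ring_hom_ring_proj[OF that(1)] units[OF that(2)]] by auto
  show ?thesis
  proof (intro fraction_components.intro fraction_components_axioms.intro \<sigma>.R.ring_axioms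
      finite_index simple_Artinian)
    show "(\<lambda>r. \<pi> i (\<sigma> r)) \<in> ring_hom R (A i)" if "i \<in> I" for i
      using ring_hom_trans[OF \<sigma>.homh proj_hom[OF that]] by (simp add: comp_def)
    show "submonoid (regular_elems R) R"
      using den unfolding left_den_set_def left_Ore_set_def mult_subset_def submonoid_def by blast
    show "\<exists>c'\<in>regular_elems R. \<exists>r'\<in>carrier R. c' \<otimes>\<^bsub>R\<^esub> r = r' \<otimes>\<^bsub>R\<^esub> c"
      if "r \<in> carrier R" "c \<in> regular_elems R" for r c
      using den that unfolding left_den_set_def left_Ore_set_def by blast
    show "\<pi> i (\<sigma> c) \<in> Units (A i)" if "i \<in> I" "c \<in> regular_elems R" for i c
      using proj_units[OF that] by blast
    show "\<exists>c\<in>regular_elems R. \<exists>r\<in>carrier R. y = inv\<^bsub>A i\<^esub> (\<pi> i (\<sigma> c)) \<otimes>\<^bsub>A i\<^esub> \<pi> i (\<sigma> r)"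
      if i: "i \<in> I" and y: "y \<in> carrier (A i)" for i y
    proof -
      interpret ring_hom_ring Q "A i" "\<pi> i" using ring_hom_ring_proj[OF i] .
      obtain q where q: "q \<in> carrier Q" "\<pi> i q = y" using exists_single[OF i y] by blast
      obtain c r where "c \<in> regular_elems R" "r \<in> carrier R" "q = inv (\<sigma> c) \<otimes> \<sigma> r"
        using is_left_localization_fraction[OF loc q(1)] by blast
      then show ?thesis using q(2) proj_units[OF i] units by (auto simp: Units_closed)
    qed
    show "x = y" if "x \<in> carrier R" "y \<in> carrier R" "\<And>i. i \<in> I \<Longrightarrow> \<pi> i (\<sigma> x) = \<pi> i (\<sigma> y)" for x y
      using proj_eqI[of "\<sigma> x" "\<sigma> y"] is_left_localization_regular_inj[OF loc] that
      by (simp add: inj_on_def)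
    show "\<exists>w\<in>carrier R. \<pi> i (\<sigma> w) \<in> Units (A i) \<and> (\<forall>j\<in>I. j \<noteq> i \<longrightarrow> \<pi> j (\<sigma> w) = \<zero>\<^bsub>A j\<^esub>)"
      if i: "i \<in> I" for i
    proof -
      obtain q where q: "q \<in> carrier Q" "\<pi> i q \<in> Units (A i)" "\<forall>j\<in>I. j \<noteq> i \<longrightarrow> \<pi> j q = \<zero>\<^bsub>A j\<^esub>"
        using components.component_support[OF i] by blast
      obtain c r where "c \<in> regular_elems R" "r \<in> carrier R" "q = inv (\<sigma> c) \<otimes> \<sigma> r"
        "\<forall>j\<in>I. \<pi> j q \<in> Units (A j) \<longrightarrow> \<pi> j (\<sigma> r) \<in> Units (A j)"
        "\<forall>j\<in>I. \<pi> j q = \<zero>\<^bsub>A j\<^esub> \<longrightarrow> \<pi> j (\<sigma> r) = \<zero>\<^bsub>A j\<^esub>"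
        by (rule localization_numerator[OF loc q(1)])
      with i q(2,3) show ?thesis by blast
    qed
  qed
qed

lemma tilde_set_Units_preimage:
  fixes R :: "('r, 'm) ring_scheme" and \<sigma> :: "'r \<Rightarrow> 'a"
  assumes loc: "is_left_localization R (regular_elems R) Q \<sigma>" and i: "i \<in> I"
  shows "tilde_set R Q \<sigma> (Units_preimage R (A i) (\<lambda>r. \<pi> i (\<sigma> r))) = Units_preimage Q (A i) (\<pi> i)"
proof -
  interpret \<sigma>: ring_hom_ring R Q \<sigma>
    using loc by (intro ring_hom_ringI2) (auto simp: is_left_localization_def)
  interpret \<pi>: ring_hom_ring Q "A i" "\<pi> i" using ring_hom_ring_proj[OF i] .
  have units: "\<And>c. c \<in> regular_elems R \<Longrightarrow> \<sigma> c \<in> Units Q"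
    using loc unfolding is_left_localization_def by auto
  let ?S = "Units_preimage R (A i) (\<lambda>r. \<pi> i (\<sigma> r))"
  let ?S' = "Units_preimage Q (A i) (\<pi> i)"
  let ?Y = "\<sigma> ` ?S \<union> {inv (\<sigma> c) | c. c \<in> regular_elems R}"
  have "mult_monoid_gen Q ?Y \<subseteq> ?S'"
  proof (rule mult_monoid_gen_least)
    have "inv (\<sigma> c) \<in> ?S'" if "c \<in> regular_elems R" for c
      using units[OF that] \<pi>.hom_Units[OF units[OF that]] by (simp add: Units_preimage_def)
    then show "?Y \<subseteq> ?S'" by (auto simp: Units_preimage_def)
  qed (auto simp: Units_preimage_def)
  moreover have "?S' \<subseteq> mult_monoid_gen Q ?Y"
  proof
    fix q assume "q \<in> ?S'"
    then have q: "q \<in> carrier Q" "\<pi> i q \<in> Units (A i)" by (auto simp: Units_preimage_def)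
    obtain c r where cr: "c \<in> regular_elems R" "r \<in> carrier R" "q = inv (\<sigma> c) \<otimes> \<sigma> r"
      "\<forall>j\<in>I. \<pi> j q \<in> Units (A j) \<longrightarrow> \<pi> j (\<sigma> r) \<in> Units (A j)"
      "\<forall>j\<in>I. \<pi> j q = \<zero>\<^bsub>A j\<^esub> \<longrightarrow> \<pi> j (\<sigma> r) = \<zero>\<^bsub>A j\<^esub>"
      by (rule localization_numerator[OF loc q(1)])
    then have "r \<in> ?S" using i q(2) by (simp add: Units_preimage_def)
    then have "\<sigma> r \<in> ?Y" by blast
    moreover have "inv (\<sigma> c) \<in> ?Y" using cr(1) by blast
    ultimately show "q \<in> mult_monoid_gen Q ?Y"
      unfolding cr(3) by (intro mult_monoid_gen_mult mult_monoid_gen_generator)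
  qed
  ultimately show ?thesis unfolding tilde_set_def by blast
qed

end

theorem corollary3p13:
  fixes R :: "('a, 'm) ring_scheme"
    and Q :: "('b, 'n) ring_scheme"
    and \<sigma> :: "'a \<Rightarrow> 'b"
    and n :: nat
    and Qs :: "nat \<Rightarrow> ('c, 'k) ring_scheme"
    and \<pi> :: "nat \<Rightarrow> 'b \<Rightarrow> 'c"
  assumes R: "ring R" "semiprime_ring R" "left_Goldie R"
    and Qcl: "is_left_localization R (regular_elems R) Q \<sigma>"
    and Qs_sa: "\<forall>i\<in>{1..n}. simple_Artinian (Qs i)"
    and proj: "\<forall>i\<in>{1..n}. \<pi> i \<in> ring_hom Q (Qs i)"
    and prod: "bij_betw (\<lambda>q. \<lambda>i\<in>{1..n}. \<pi> i q) (carrier Q) (PiE {1..n} (\<lambda>i. carrier (Qs i)))"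
  defines "S' \<equiv> (\<lambda>i. {q \<in> carrier Q. \<pi> i q \<in> Units (Qs i)})"
    and "S \<equiv> (\<lambda>i. {r \<in> carrier R. \<sigma> r \<in> carrier Q \<and> \<pi> i (\<sigma> r) \<in> Units (Qs i)})"
  shows "(\<forall>T\<in>maxDen_l R. regular_elems R \<subseteq> T)
    \<and> maxDen_l R = S ` {1..n}
    \<and> maxDen_l Q = S' ` {1..n}
    \<and> bij_betw (tilde_set R Q \<sigma>) (maxDen_l R) (maxDen_l Q)
    \<and> (\<forall>T\<in>maxDen_l R. {r \<in> carrier R. \<sigma> r \<in> tilde_set R Q \<sigma> T} = T)
    \<and> (\<forall>U\<in>maxDen_l Q. tilde_set R Q \<sigma> {r \<in> carrier R. \<sigma> r \<in> U} = U)
    \<and> (\<forall>i\<in>{1..n}. \<exists>\<phi>. is_left_localization R (S i) (Qs i) \<phi>)"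
proof -
  \<comment> \<open>Semiprimeness and the Goldie condition only guarantee, via Goldie's theorem, the existence
    of \<open>Q\<close> and of its decomposition, which are given here as hypotheses.\<close>
  interpret Q: simple_Artinian_product Q "{1..n}" Qs \<pi>
    using Qcl Qs_sa proj prod
    by (intro simple_Artinian_product.intro simple_Artinian_product_axioms.intro)
      (auto simp: is_left_localization_def)
  interpret R: fraction_components R "{1..n}" Qs "\<lambda>i r. \<pi> i (\<sigma> r)" "regular_elems R"
    by (rule Q.fraction_components_of_localization[OF Qcl])
  have S: "S = (\<lambda>i. Units_preimage R (Qs i) (\<lambda>r. \<pi> i (\<sigma> r)))"
    using Qcl unfolding S_def Units_preimage_def is_left_localization_def
    by (auto dest: ring_hom_closed)
  have S': "S' = (\<lambda>i. Units_preimage Q (Qs i) (\<pi> i))"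
    unfolding S'_def Units_preimage_def ..
  have max: "maxDen_l R = S ` {1..n}" "maxDen_l Q = S' ` {1..n}"
    unfolding S S' by (rule R.maxDen_l_eq Q.components.maxDen_l_eq)+
  have tilde: "tilde_set R Q \<sigma> (S i) = S' i" if "i \<in> {1..n}" for i
    unfolding S S' using Q.tilde_set_Units_preimage[OF Qcl that] .
  have preimage: "{r \<in> carrier R. \<sigma> r \<in> S' i} = S i" for i
    unfolding S_def S'_def by auto
  have "bij_betw (tilde_set R Q \<sigma>) (maxDen_l R) (maxDen_l Q)"
    unfolding max using Q.components.inj_on_Units_preimage tilde
    by (intro bij_betw_image_image) (simp_all add: S')
  moreover have "regular_elems R \<subseteq> S i" "\<exists>\<phi>. is_left_localization R (S i) (Qs i) \<phi>"
    if "i \<in> {1..n}" for i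
    unfolding S using R.left_fraction_component[OF that]
    by (auto simp: left_fraction_component.denominators_subset_Units_preimage
        intro: left_fraction_component.is_left_localization_Units_preimage)
  ultimately show ?thesis using max tilde preimage by auto
qed

end
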